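(* Let $\mathcal S=(S_1,\dots,S_s)\in B(H)^s$ be an $s$-tuple of selfadjoint operators, let $(\lambda_k)_{k=1}^\infty\subset\operatorname{Int}_{\mathbb R^s}W_{\rm e}(\mathcal S)$ with $(\lambda_k)_{k=1}^\infty\in\mathcal D(\mathcal S)$, and write $\lambda_k=(\lambda_{k,1},\dots,\lambda_{k,s})$. Let $\alpha_0,\dots,\alpha_s\in\mathbb R$ with $(\alpha_1,\dots,\alpha_s)\ne(0,\dots,0)$, let $V=\alpha_0I+\sum_{j=1}^s\alpha_jS_j$ and $a=\inf\{t:t\in W(V)\}$. Then $$\sum_{k=1}^\infty\Bigl(\alpha_0-a+\sum_{j=1}^s\alpha_j\lambda_{k,j}\Bigr)=\infty.$$
   Context: $H$ is an infinite-dimensional complex separable Hilbert space. $W(V)=\{\langle Vx,x\rangle:\|x\|=1\}$. $W_{\rm e}(\mathcal S)\subset\mathbb R^s$ is the set of $\lambda$ with $\langle S_jx_k,x_k\rangle\to\lambda_j$ for all $j$ for some orthonormal sequence $(x_k)$. $\mathcal D(\mathcal S)$ is the set of sequences $(\langle S_1u_k,u_k\rangle,\dots,\langle S_su_k,u_k\rangle)_{k\ge1}$ over orthonormal bases $(u_k)$ of $H$. $\operatorname{Int}_{\mathbb R^s}$ is interior in $\mathbb R^s$. *)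

theory Defs
  imports "HOL-Analysis.Analysis"
begin

text \<open>Model of H: the infinite-dimensional complex separable Hilbert space
  realised concretely as l2(N) (unique up to unitary equivalence).\<close>

type_synonym vec = "nat \<Rightarrow> complex"
type_synonym op = "vec \<Rightarrow> vec"

definition l2 :: "vec set" where
  "l2 = {x. summable (\<lambda>n. (cmod (x n))\<^sup>2)}"

definition l2_inner :: "vec \<Rightarrow> vec \<Rightarrow> complex" where
  "l2_inner x y = (\<Sum>n. x n * cnj (y n))"

definition l2_norm :: "vec \<Rightarrow> real" where
  "l2_norm x = sqrt (\<Sum>n. (cmod (x n))\<^sup>2)"

definition vadd :: "vec \<Rightarrow> vec \<Rightarrow> vec" where
  "vadd x y = (\<lambda>n. x n + y n)"

definition vscale :: "complex \<Rightarrow> vec \<Rightarrow> vec" where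
  "vscale c x = (\<lambda>n. c * x n)"

definition bounded_op :: "op \<Rightarrow> bool" where
  "bounded_op T \<longleftrightarrow>
     (\<forall>x\<in>l2. T x \<in> l2) \<and>
     (\<forall>x\<in>l2. \<forall>y\<in>l2. T (vadd x y) = vadd (T x) (T y)) \<and>
     (\<forall>x\<in>l2. \<forall>c. T (vscale c x) = vscale c (T x)) \<and>
     (\<exists>C. \<forall>x\<in>l2. l2_norm (T x) \<le> C * l2_norm x)"

definition selfadjoint :: "op \<Rightarrow> bool" where
  "selfadjoint T \<longleftrightarrow> bounded_op T \<and>
     (\<forall>x\<in>l2. \<forall>y\<in>l2. l2_inner (T x) y = l2_inner x (T y))"

definition orthonormal_seq :: "(nat \<Rightarrow> vec) \<Rightarrow> bool" where
  "orthonormal_seq u \<longleftrightarrow> (\<forall>k. u k \<in> l2) \<and>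
     (\<forall>i j. l2_inner (u i) (u j) = (if i = j then 1 else 0))"

definition orthonormal_basis :: "(nat \<Rightarrow> vec) \<Rightarrow> bool" where
  "orthonormal_basis u \<longleftrightarrow> orthonormal_seq u \<and>
     (\<forall>x\<in>l2. (\<forall>k. l2_inner x (u k) = 0) \<longrightarrow> x = (\<lambda>n. 0))"

definition numerical_range :: "op \<Rightarrow> complex set" where
  "numerical_range V = {l2_inner (V x) x | x. x \<in> l2 \<and> l2_norm x = 1}"

definition ess_num_range :: "('s::finite \<Rightarrow> op) \<Rightarrow> (real^'s) set" where
  "ess_num_range S = {lam. \<exists>x. orthonormal_seq x \<and>
     (\<forall>j. (\<lambda>k. Re (l2_inner (S j (x k)) (x k))) \<longlonglongrightarrow> lam $ j)}"

definition diagonals :: "('s::finite \<Rightarrow> op) \<Rightarrow> (nat \<Rightarrow> real^'s) set" where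
  "diagonals S = {d. \<exists>u. orthonormal_basis u \<and>
     (\<forall>k. d k = (\<chi> j. Re (l2_inner (S j (u k)) (u k))))}"

end

theory Submission
  imports Defs
begin

text \<open>Let \<open>B\<close> be the form of \<open>V - a I\<close>; it is positive semidefinite, and its diagonal entries in
  the orthonormal basis \<open>u\<close> realising \<open>\<lambda>\<close> are the numbers \<open>\<alpha>0 - a + \<Sum>j \<alpha>j \<lambda>k,j \<ge> 0\<close>. If
  they had a finite sum, \<open>B\<close> would be of trace class: by the triangle inequality for the seminorm
  \<open>\<surd>B(x,x)\<close> and Parseval's identity, for every unit vector \<open>x\<close> and every \<open>N\<close>,
  \<open>\<surd>B(x,x) \<le> \<Sum>k<N |\<langle>x,uk\<rangle>| \<surd>B(uk,uk) + (\<Sum>k\<ge>N B(uk,uk))\<^sup>1\<^sup>/\<^sup>2\<close>,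
  and along an orthonormal sequence \<open>xn\<close> the finite sum tends to \<open>0\<close> by Bessel's inequality, so
  \<open>B(xn,xn) \<longrightarrow> 0\<close>. The affine functional \<open>\<mu> \<mapsto> \<alpha>0 - a + \<Sum>j \<alpha>j \<mu>j\<close> would then vanish on
  the essential numerical range, which is impossible since that set has interior points and \<open>\<alpha> \<noteq> 0\<close>.\<close>

lemma sum_le_suminf_tail:
  fixes f :: "nat \<Rightarrow> real"
  assumes "summable f" and "\<And>k. 0 \<le> f k" and "M \<le> L"
  shows "sum f {M..<L} \<le> suminf f - sum f {..<M}"
  using sum_le_suminf[OF assms(1), of "{..<L}"] assms(2) sum_diff_nat_ivl[of 0 M L f] assms(3)
  by (simp add: atLeast0LessThan)

lemma suminf_tail_tendsto_zero:
  fixes f :: "nat \<Rightarrow> real"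
  assumes "summable f"
  shows "(\<lambda>M. suminf f - sum f {..<M}) \<longlonglongrightarrow> 0"
  using tendsto_diff[OF tendsto_const summable_LIMSEQ[OF assms], of "suminf f"] by simp

lemma summable_if_not_tendsto_at_top:
  fixes f :: "nat \<Rightarrow> real"
  assumes nonneg: "\<And>k. 0 \<le> f k" and not_top: "\<not> filterlim (\<lambda>N. \<Sum>k<N. f k) at_top sequentially"
  shows "summable f"
proof -
  obtain Z where "\<not> (\<forall>\<^sub>F N in sequentially. Z \<le> (\<Sum>k<N. f k))"
    using not_top filterlim_at_top by blast
  have "(\<Sum>k<N. f k) \<le> Z" for N
  proof (rule ccontr)
    assume "\<not> (\<Sum>k<N. f k) \<le> Z"
    then have "Z \<le> (\<Sum>k<M. f k)" if "N \<le> M" for M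
      using sum_mono2[of "{..<M}" "{..<N}" f] that nonneg by fastforce
    then have "\<forall>\<^sub>F M in sequentially. Z \<le> (\<Sum>k<M. f k)"
      by (auto simp: eventually_sequentially)
    then show False using \<open>\<not> (\<forall>\<^sub>F N in sequentially. Z \<le> (\<Sum>k<N. f k))\<close> by blast
  qed
  then show ?thesis by (rule summableI_nonneg_bounded[OF nonneg])
qed

lemma summable_mult_square_summable:
  fixes a b :: "nat \<Rightarrow> complex"
  assumes "summable (\<lambda>k. (cmod (a k))\<^sup>2)" and "summable (\<lambda>k. (cmod (b k))\<^sup>2)"
  shows "summable (\<lambda>k. a k * b k)"
proof (rule summable_norm_cancel, rule summable_comparison_test)
  show "\<exists>N. \<forall>n\<ge>N. norm (norm (a n * b n)) \<le> (cmod (a n))\<^sup>2 + (cmod (b n))\<^sup>2"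
  proof (intro exI allI impI)
    fix n :: nat
    have "2 * (cmod (a n) * cmod (b n)) \<le> (cmod (a n))\<^sup>2 + (cmod (b n))\<^sup>2"
      using sum_squares_bound[of "cmod (a n)" "cmod (b n)"] by simp
    moreover have "0 \<le> cmod (a n) * cmod (b n)" by simp
    moreover have "norm (norm (a n * b n)) = cmod (a n) * cmod (b n)" by (simp add: norm_mult)
    ultimately show "norm (norm (a n * b n)) \<le> (cmod (a n))\<^sup>2 + (cmod (b n))\<^sup>2"
      by linarith
  qed
  show "summable (\<lambda>n. (cmod (a n))\<^sup>2 + (cmod (b n))\<^sup>2)"
    using assms by (rule summable_add)
qed

lemma quadratic_nonneg_discriminant:
  fixes A P Q :: real
  assumes nonneg: "\<And>t. 0 \<le> A - 2 * t * P + t\<^sup>2 * Q" and "Q \<ge> 0"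
  shows "P\<^sup>2 \<le> A * Q"
proof (cases "Q = 0")
  case True
  have "P = 0"
  proof (rule ccontr)
    assume "P \<noteq> 0"
    have "0 \<le> A - 2 * ((A + 1) / (2 * P)) * P + ((A + 1) / (2 * P))\<^sup>2 * Q" by (rule nonneg)
    also have "\<dots> = -1" using \<open>P \<noteq> 0\<close> True by (simp add: field_simps)
    finally show False by simp
  qed
  then show ?thesis using True by simp
next
  case False
  then have "Q > 0" using \<open>Q \<ge> 0\<close> by simp
  have "0 \<le> A - 2 * (P / Q) * P + (P / Q)\<^sup>2 * Q" by (rule nonneg)
  also have "\<dots> = A - P\<^sup>2 / Q" using \<open>Q > 0\<close> by (simp add: field_simps power2_eq_square)
  finally show ?thesis using \<open>Q > 0\<close> by (simp add: field_simps)
qed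

lemma coeffs_zero_if_affine_vanishes_on_interior:
  fixes c :: "'s::finite \<Rightarrow> real" and A :: "(real^'s) set"
  assumes p: "p \<in> interior A" and zero: "\<And>\<mu>. \<mu> \<in> A \<Longrightarrow> c0 + (\<Sum>j\<in>UNIV. c j * \<mu> $ j) = 0"
  shows "c = (\<lambda>j. 0)"
proof (rule ccontr)
  assume "c \<noteq> (\<lambda>j. 0)"
  define v :: "real^'s" where "v = (\<chi> j. c j)"
  obtain e where "e > 0" and ball: "ball p e \<subseteq> A"
    using p mem_interior by blast
  define \<delta> where "\<delta> = e / (norm v + 1)"
  have nv: "norm v + 1 > 0" using norm_ge_zero[of v] by linarith
  then have "\<delta> > 0" using \<open>e > 0\<close> by (simp add: \<delta>_def)
  have "norm (\<delta> *\<^sub>R v) < e"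
    using \<open>e > 0\<close> \<open>\<delta> > 0\<close> nv by (simp add: \<delta>_def field_simps)
  then have "p + \<delta> *\<^sub>R v \<in> ball p e" by (simp add: dist_norm del: norm_scaleR)
  then have "p + \<delta> *\<^sub>R v \<in> A" using ball by blast
  moreover have "p \<in> A" using p interior_subset by blast
  ultimately have "\<delta> * (\<Sum>j\<in>UNIV. (c j)\<^sup>2) = 0"
    using zero[of p] zero[of "p + \<delta> *\<^sub>R v"]
    by (simp add: v_def algebra_simps sum.distrib sum_distrib_left power2_eq_square)
  moreover have "(\<Sum>j\<in>UNIV. (c j)\<^sup>2) > 0"
    using \<open>c \<noteq> (\<lambda>j. 0)\<close> by (auto simp: fun_eq_iff intro: sum_pos2)
  ultimately show False using \<open>\<delta> > 0\<close> by simp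
qed

lemma l2_add: "x \<in> l2 \<Longrightarrow> y \<in> l2 \<Longrightarrow> (\<lambda>n. x n + y n) \<in> l2"
proof -
  have sq: "(cmod (a + b))\<^sup>2 \<le> 2 * (cmod a)\<^sup>2 + 2 * (cmod b)\<^sup>2" for a b :: complex
  proof -
    have "(cmod (a + b))\<^sup>2 \<le> (cmod a + cmod b)\<^sup>2"
      by (simp add: power_mono norm_triangle_ineq)
    also have "\<dots> \<le> 2 * (cmod a)\<^sup>2 + 2 * (cmod b)\<^sup>2"
      using sum_squares_bound[of "cmod a" "cmod b"] by (simp add: power2_sum)
    finally show ?thesis .
  qed
  show "x \<in> l2 \<Longrightarrow> y \<in> l2 \<Longrightarrow> (\<lambda>n. x n + y n) \<in> l2"
    unfolding l2_def
    by (auto intro!: summable_comparison_test[where g="\<lambda>n. 2 * (cmod (x n))\<^sup>2 + 2 * (cmod (y n))\<^sup>2"]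
        summable_add summable_mult sq)
qed

lemma l2_scale: "x \<in> l2 \<Longrightarrow> (\<lambda>n. c * x n) \<in> l2"
  unfolding l2_def by (simp add: norm_mult power_mult_distrib summable_mult)

lemma l2_diff: "x \<in> l2 \<Longrightarrow> y \<in> l2 \<Longrightarrow> (\<lambda>n. x n - y n) \<in> l2"
  using l2_add[of x "\<lambda>n. - 1 * y n"] l2_scale[of y "- 1"] by simp

lemma l2_sum: "finite A \<Longrightarrow> (\<And>k. k \<in> A \<Longrightarrow> f k \<in> l2) \<Longrightarrow> (\<lambda>n. \<Sum>k\<in>A. f k n) \<in> l2"
  by (induction A rule: finite_induct) (simp add: l2_def, simp add: l2_add)

lemma summable_l2_inner: "x \<in> l2 \<Longrightarrow> y \<in> l2 \<Longrightarrow> summable (\<lambda>n. x n * cnj (y n))"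
  unfolding l2_def by (rule summable_mult_square_summable) simp_all

lemma l2_inner_add_left:
  "x \<in> l2 \<Longrightarrow> y \<in> l2 \<Longrightarrow> z \<in> l2 \<Longrightarrow> l2_inner (\<lambda>n. x n + y n) z = l2_inner x z + l2_inner y z"
  unfolding l2_inner_def distrib_right by (rule suminf_add[symmetric]) (simp_all add: summable_l2_inner)

lemma l2_inner_scale_left: "x \<in> l2 \<Longrightarrow> z \<in> l2 \<Longrightarrow> l2_inner (\<lambda>n. c * x n) z = c * l2_inner x z"
  unfolding l2_inner_def
  by (subst suminf_mult[symmetric]) (auto simp: summable_l2_inner mult.assoc)

lemma l2_inner_commute: "x \<in> l2 \<Longrightarrow> y \<in> l2 \<Longrightarrow> l2_inner y x = cnj (l2_inner x y)"
proof -
  assume "x \<in> l2" "y \<in> l2"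
  then have "(\<lambda>n. cnj (x n * cnj (y n))) sums cnj (l2_inner x y)"
    unfolding l2_inner_def sums_cnj by (rule summable_sums[OF summable_l2_inner])
  then show ?thesis
    unfolding l2_inner_def by (simp add: sums_iff mult.commute)
qed

lemma l2_norm_square: "x \<in> l2 \<Longrightarrow> (l2_norm x)\<^sup>2 = (\<Sum>n. (cmod (x n))\<^sup>2)"
  unfolding l2_norm_def l2_def by (simp add: suminf_nonneg)

lemma l2_inner_self: "x \<in> l2 \<Longrightarrow> l2_inner x x = complex_of_real ((l2_norm x)\<^sup>2)"
proof -
  assume x: "x \<in> l2"
  have "(\<lambda>n. x n * cnj (x n)) = (\<lambda>n. complex_of_real ((cmod (x n))\<^sup>2))"
    by (rule ext) (rule complex_norm_square[symmetric])
  with x show ?thesis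
    unfolding l2_inner_def l2_norm_square[OF x] l2_def by (simp add: suminf_of_real)
qed

lemma l2_norm_nonneg: "x \<in> l2 \<Longrightarrow> l2_norm x \<ge> 0"
  unfolding l2_norm_def l2_def by (simp add: suminf_nonneg)

section \<open>Positive semidefinite forms\<close>

text \<open>Only linearity in the first argument is required: conjugate linearity in the second one
  follows from Hermitian symmetry.\<close>

definition psd_form :: "(vec \<Rightarrow> vec \<Rightarrow> complex) \<Rightarrow> bool" where
  "psd_form B \<longleftrightarrow>
     (\<forall>x\<in>l2. \<forall>y\<in>l2. \<forall>z\<in>l2. B (\<lambda>n. x n + y n) z = B x z + B y z) \<and>
     (\<forall>x\<in>l2. \<forall>z\<in>l2. \<forall>c. B (\<lambda>n. c * x n) z = c * B x z) \<and>
     (\<forall>x\<in>l2. \<forall>y\<in>l2. B y x = cnj (B x y)) \<and>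
     (\<forall>x\<in>l2. 0 \<le> Re (B x x))"

definition form_seminorm :: "(vec \<Rightarrow> vec \<Rightarrow> complex) \<Rightarrow> vec \<Rightarrow> real" where
  "form_seminorm B x = sqrt (Re (B x x))"

lemma psd_form_add_left:
  "psd_form B \<Longrightarrow> x \<in> l2 \<Longrightarrow> y \<in> l2 \<Longrightarrow> z \<in> l2 \<Longrightarrow> B (\<lambda>n. x n + y n) z = B x z + B y z"
  unfolding psd_form_def by blast

lemma psd_form_scale_left: "psd_form B \<Longrightarrow> x \<in> l2 \<Longrightarrow> z \<in> l2 \<Longrightarrow> B (\<lambda>n. c * x n) z = c * B x z"
  unfolding psd_form_def by blast

lemma psd_form_hermitian: "psd_form B \<Longrightarrow> x \<in> l2 \<Longrightarrow> y \<in> l2 \<Longrightarrow> B y x = cnj (B x y)"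
  unfolding psd_form_def by blast

lemma psd_form_nonneg: "psd_form B \<Longrightarrow> x \<in> l2 \<Longrightarrow> 0 \<le> Re (B x x)"
  unfolding psd_form_def by blast

lemma psd_form_add_right:
  "psd_form B \<Longrightarrow> x \<in> l2 \<Longrightarrow> y \<in> l2 \<Longrightarrow> z \<in> l2 \<Longrightarrow> B z (\<lambda>n. x n + y n) = B z x + B z y"
  using psd_form_hermitian[of B "\<lambda>n. x n + y n" z] psd_form_hermitian[of B x z]
    psd_form_hermitian[of B y z]
  by (simp add: psd_form_add_left l2_add)

lemma psd_form_scale_right:
  "psd_form B \<Longrightarrow> x \<in> l2 \<Longrightarrow> z \<in> l2 \<Longrightarrow> B z (\<lambda>n. c * x n) = cnj c * B z x"
  using psd_form_hermitian[of B "\<lambda>n. c * x n" z] psd_form_hermitian[of B x z]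
  by (simp add: psd_form_scale_left l2_scale)

lemma psd_form_zero_left: "psd_form B \<Longrightarrow> z \<in> l2 \<Longrightarrow> B (\<lambda>n. 0) z = 0"
  using psd_form_scale_left[of B z z 0] by simp

lemma psd_form_expand:
  assumes B: "psd_form B" and x: "x \<in> l2" and y: "y \<in> l2"
  shows "Re (B (\<lambda>n. x n + s * y n) (\<lambda>n. x n + s * y n))
           = Re (B x x) + 2 * Re (cnj s * B x y) + (cmod s)\<^sup>2 * Re (B y y)"
proof -
  have sy: "(\<lambda>n. s * y n) \<in> l2" using y by (rule l2_scale)
  have "B (\<lambda>n. x n + s * y n) (\<lambda>n. x n + s * y n)
      = B x (\<lambda>n. x n + s * y n) + s * B y (\<lambda>n. x n + s * y n)"
    using psd_form_add_left[OF B x sy] psd_form_scale_left[OF B y] l2_add[OF x sy] by simp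
  also have "\<dots> = B x x + cnj s * B x y + s * B y x + s * cnj s * B y y"
    using psd_form_add_right[OF B x sy x] psd_form_scale_right[OF B y x]
      psd_form_add_right[OF B x sy y] psd_form_scale_right[OF B y y]
    by (simp add: algebra_simps)
  also have "s * B y x = cnj (cnj s * B x y)"
    using psd_form_hermitian[OF B x y] by simp
  finally have "B (\<lambda>n. x n + s * y n) (\<lambda>n. x n + s * y n)
      = B x x + cnj s * B x y + cnj (cnj s * B x y) + s * cnj s * B y y" .
  moreover have "Re (s * cnj s * B y y) = (cmod s)\<^sup>2 * Re (B y y)"
    by (simp add: complex_norm_square[symmetric] mult.commute)
  ultimately show ?thesis by simp
qed

lemma psd_form_Cauchy_Schwarz:
  assumes B: "psd_form B" and x: "x \<in> l2" and y: "y \<in> l2"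
  shows "cmod (B x y) \<le> form_seminorm B x * form_seminorm B y"
proof -
  txt \<open>\<open>B(x - t B(x,y) y, x - t B(x,y) y) \<ge> 0\<close> for all real \<open>t\<close>: a quadratic in \<open>t\<close> whose
    discriminant must be non-positive.\<close>
  define p where "p = (cmod (B x y))\<^sup>2"
  have "0 \<le> Re (B x x) - 2 * t * p + t\<^sup>2 * (p * Re (B y y))" for t :: real
  proof -
    define s where "s = - (complex_of_real t * B x y)"
    have "cnj s * B x y = - complex_of_real (t * p)"
      using complex_norm_square[of "B x y"] by (simp add: s_def p_def mult_ac)
    moreover have "(cmod s)\<^sup>2 = t\<^sup>2 * p"
      by (simp add: s_def p_def norm_mult power_mult_distrib)
    ultimately show ?thesis
      using psd_form_expand[OF B x y, of s] psd_form_nonneg[OF B l2_add[OF x l2_scale[OF y, of s]]]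
      by (simp add: mult.assoc)
  qed
  then have "p\<^sup>2 \<le> Re (B x x) * (p * Re (B y y))"
    by (rule quadratic_nonneg_discriminant) (simp add: p_def psd_form_nonneg[OF B y])
  then have "p \<le> Re (B x x) * Re (B y y)"
    using psd_form_nonneg[OF B x] psd_form_nonneg[OF B y]
    by (cases "p = 0") (simp_all add: p_def power2_eq_square mult_ac)
  then have "cmod (B x y) \<le> sqrt (Re (B x x) * Re (B y y))"
    by (simp add: p_def real_le_rsqrt)
  then show ?thesis by (simp add: form_seminorm_def real_sqrt_mult)
qed

lemma form_seminorm_add:
  assumes B: "psd_form B" and x: "x \<in> l2" and y: "y \<in> l2"
  shows "form_seminorm B (\<lambda>n. x n + y n) \<le> form_seminorm B x + form_seminorm B y"
proof -
  have "Re (B x y) \<le> form_seminorm B x * form_seminorm B y"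
    using complex_Re_le_cmod[of "B x y"] psd_form_Cauchy_Schwarz[OF B x y] by linarith
  then have "Re (B (\<lambda>n. x n + y n) (\<lambda>n. x n + y n)) \<le> (form_seminorm B x + form_seminorm B y)\<^sup>2"
    using psd_form_expand[OF B x y, of 1] psd_form_nonneg[OF B x] psd_form_nonneg[OF B y]
    by (simp add: form_seminorm_def power2_sum)
  then have "form_seminorm B (\<lambda>n. x n + y n) \<le> sqrt ((form_seminorm B x + form_seminorm B y)\<^sup>2)"
    unfolding form_seminorm_def[of B "\<lambda>n. x n + y n"] by (rule real_sqrt_le_mono)
  then show ?thesis
    using psd_form_nonneg[OF B x] psd_form_nonneg[OF B y] by (simp add: form_seminorm_def)
qed

lemma form_seminorm_scale:
  assumes B: "psd_form B" and x: "x \<in> l2"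
  shows "form_seminorm B (\<lambda>n. c * x n) = cmod c * form_seminorm B x"
proof -
  have "B (\<lambda>n. c * x n) (\<lambda>n. c * x n) = (c * cnj c) * B x x"
    using psd_form_scale_left[OF B x l2_scale[OF x]] psd_form_scale_right[OF B x x] by simp
  then have "Re (B (\<lambda>n. c * x n) (\<lambda>n. c * x n)) = (cmod c)\<^sup>2 * Re (B x x)"
    by (simp flip: complex_norm_square)
  then show ?thesis by (simp add: form_seminorm_def real_sqrt_mult)
qed

lemma form_seminorm_sum:
  assumes B: "psd_form B"
  shows "finite A \<Longrightarrow> (\<And>k. k \<in> A \<Longrightarrow> f k \<in> l2) \<Longrightarrow>
    form_seminorm B (\<lambda>n. \<Sum>k\<in>A. f k n) \<le> (\<Sum>k\<in>A. form_seminorm B (f k))"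
proof (induction A rule: finite_induct)
  case empty
  have "(\<lambda>n. 0) \<in> l2" by (simp add: l2_def)
  then show ?case by (simp add: form_seminorm_def psd_form_zero_left[OF B])
next
  case (insert a A)
  then have "form_seminorm B (\<lambda>n. \<Sum>k\<in>insert a A. f k n)
      \<le> form_seminorm B (f a) + form_seminorm B (\<lambda>n. \<Sum>k\<in>A. f k n)"
    using form_seminorm_add[OF B, of "f a" "\<lambda>n. \<Sum>k\<in>A. f k n"] by (simp add: l2_sum)
  with insert show ?case by simp
qed

lemma psd_form_l2_inner: "psd_form l2_inner"
  unfolding psd_form_def
proof (intro conjI ballI allI)
  fix x y assume "x \<in> l2" "y \<in> l2"
  then show "l2_inner y x = cnj (l2_inner x y)" by (rule l2_inner_commute)
qed (simp_all add: l2_inner_add_left l2_inner_scale_left l2_inner_self)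

lemma form_seminorm_l2_inner: "x \<in> l2 \<Longrightarrow> form_seminorm l2_inner x = l2_norm x"
  by (simp add: form_seminorm_def l2_inner_self l2_norm_nonneg)

lemma l2_inner_Cauchy_Schwarz: "x \<in> l2 \<Longrightarrow> y \<in> l2 \<Longrightarrow> cmod (l2_inner x y) \<le> l2_norm x * l2_norm y"
  using psd_form_Cauchy_Schwarz[OF psd_form_l2_inner] by (simp add: form_seminorm_l2_inner)

lemma l2_norm_scale: "x \<in> l2 \<Longrightarrow> l2_norm (\<lambda>n. c * x n) = cmod c * l2_norm x"
  using form_seminorm_scale[OF psd_form_l2_inner] by (simp add: form_seminorm_l2_inner l2_scale)

lemma l2_norm_add_le: "x \<in> l2 \<Longrightarrow> y \<in> l2 \<Longrightarrow> l2_norm (\<lambda>n. x n + y n) \<le> l2_norm x + l2_norm y"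
  using form_seminorm_add[OF psd_form_l2_inner] by (simp add: form_seminorm_l2_inner l2_add)

lemma l2_norm_sum_le:
  assumes "finite A" and "\<And>k. k \<in> A \<Longrightarrow> f k \<in> l2"
  shows "l2_norm (\<lambda>n. \<Sum>k\<in>A. f k n) \<le> (\<Sum>k\<in>A. l2_norm (f k))"
proof -
  have "form_seminorm l2_inner (\<lambda>n. \<Sum>k\<in>A. f k n) \<le> (\<Sum>k\<in>A. form_seminorm l2_inner (f k))"
    using assms by (rule form_seminorm_sum[OF psd_form_l2_inner])
  with assms show ?thesis by (simp add: form_seminorm_l2_inner l2_sum)
qed

lemma l2_inner_scale_right: "x \<in> l2 \<Longrightarrow> z \<in> l2 \<Longrightarrow> l2_inner z (\<lambda>n. c * x n) = cnj c * l2_inner z x"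
  by (rule psd_form_scale_right[OF psd_form_l2_inner])

lemma l2_inner_diff_left:
  "x \<in> l2 \<Longrightarrow> y \<in> l2 \<Longrightarrow> z \<in> l2 \<Longrightarrow> l2_inner (\<lambda>n. x n - y n) z = l2_inner x z - l2_inner y z"
  using l2_inner_add_left[of x "\<lambda>n. - 1 * y n" z] l2_inner_scale_left[of y z "- 1"] l2_scale[of y "- 1"]
  by simp

lemma l2_inner_sum_left:
  "finite A \<Longrightarrow> (\<And>k. k \<in> A \<Longrightarrow> f k \<in> l2) \<Longrightarrow> z \<in> l2 \<Longrightarrow>
    l2_inner (\<lambda>n. \<Sum>k\<in>A. f k n) z = (\<Sum>k\<in>A. l2_inner (f k) z)"
proof (induction A rule: finite_induct)
  case empty
  then show ?case by (simp add: l2_inner_def)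
next
  case (insert a A)
  then show ?case by (simp add: l2_inner_add_left l2_sum)
qed

lemma l2_inner_sum_right:
  assumes "finite A" and "\<And>k. k \<in> A \<Longrightarrow> f k \<in> l2" and "z \<in> l2"
  shows "l2_inner z (\<lambda>n. \<Sum>k\<in>A. f k n) = (\<Sum>k\<in>A. l2_inner z (f k))"
  using assms l2_inner_sum_left[OF assms] l2_inner_commute[OF l2_sum[OF assms(1,2)] assms(3)]
  by (simp add: l2_inner_commute[of _ z] cnj_sum)

section \<open>Orthonormal expansions\<close>

lemma orthonormal_seq_l2: "orthonormal_seq u \<Longrightarrow> u k \<in> l2"
  by (simp add: orthonormal_seq_def)

lemma orthonormal_seq_inner: "orthonormal_seq u \<Longrightarrow> l2_inner (u i) (u j) = (if i = j then 1 else 0)"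
  by (simp add: orthonormal_seq_def)

lemma orthonormal_seq_norm: "orthonormal_seq u \<Longrightarrow> l2_norm (u k) = 1"
proof -
  assume u: "orthonormal_seq u"
  have "complex_of_real ((l2_norm (u k))\<^sup>2) = 1"
    using l2_inner_self[OF orthonormal_seq_l2[OF u]] orthonormal_seq_inner[OF u, of k k] by simp
  then have "(l2_norm (u k))\<^sup>2 = 1" by (simp only: of_real_eq_1_iff)
  moreover have "0 \<le> l2_norm (u k)" by (rule l2_norm_nonneg[OF orthonormal_seq_l2[OF u]])
  ultimately show ?thesis by (simp add: power2_eq_1_iff)
qed

definition vec_lincomb :: "(nat \<Rightarrow> vec) \<Rightarrow> nat set \<Rightarrow> (nat \<Rightarrow> complex) \<Rightarrow> vec" where
  "vec_lincomb u A c = (\<lambda>n. \<Sum>k\<in>A. c k * u k n)"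

lemma vec_lincomb_l2: "orthonormal_seq u \<Longrightarrow> finite A \<Longrightarrow> vec_lincomb u A c \<in> l2"
  unfolding vec_lincomb_def by (intro l2_sum l2_scale orthonormal_seq_l2)

lemma l2_inner_vec_lincomb_left:
  assumes u: "orthonormal_seq u" and A: "finite A" and y: "y \<in> l2"
  shows "l2_inner (vec_lincomb u A c) y = (\<Sum>k\<in>A. c k * l2_inner (u k) y)"
  unfolding vec_lincomb_def using A y
  by (simp add: l2_inner_sum_left l2_inner_scale_left l2_scale orthonormal_seq_l2[OF u])

lemma l2_inner_vec_lincomb_right:
  assumes u: "orthonormal_seq u" and A: "finite A" and y: "y \<in> l2"
  shows "l2_inner y (vec_lincomb u A c) = (\<Sum>k\<in>A. cnj (c k) * l2_inner y (u k))"
  unfolding vec_lincomb_def using A y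
  by (simp add: l2_inner_sum_right l2_inner_scale_right l2_scale orthonormal_seq_l2[OF u])

lemma l2_inner_vec_lincomb_basis:
  assumes u: "orthonormal_seq u" and A: "finite A"
  shows "l2_inner (vec_lincomb u A c) (u j) = (if j \<in> A then c j else 0)"
proof -
  have "l2_inner (vec_lincomb u A c) (u j) = (\<Sum>k\<in>A. if k = j then c j else 0)"
    by (simp add: l2_inner_vec_lincomb_left[OF u A orthonormal_seq_l2[OF u]] orthonormal_seq_inner[OF u])
      (rule sum.cong, auto)
  with A show ?thesis by simp
qed

lemma l2_norm_vec_lincomb:
  assumes u: "orthonormal_seq u" and A: "finite A"
  shows "(l2_norm (vec_lincomb u A c))\<^sup>2 = (\<Sum>k\<in>A. (cmod (c k))\<^sup>2)"
proof -
  have P: "vec_lincomb u A c \<in> l2" using u A by (rule vec_lincomb_l2)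
  have "complex_of_real ((l2_norm (vec_lincomb u A c))\<^sup>2) = l2_inner (vec_lincomb u A c) (vec_lincomb u A c)"
    by (rule l2_inner_self[OF P, symmetric])
  also have "\<dots> = (\<Sum>k\<in>A. cnj (c k) * c k)"
    using A by (simp add: l2_inner_vec_lincomb_right[OF u A P] l2_inner_vec_lincomb_basis[OF u A])
  also have "\<dots> = complex_of_real (\<Sum>k\<in>A. (cmod (c k))\<^sup>2)"
    unfolding of_real_sum by (rule sum.cong[OF refl]) (metis complex_norm_square mult.commute)
  finally show ?thesis by (simp only: of_real_eq_iff)
qed

lemma bessel_identity:
  assumes u: "orthonormal_seq u" and A: "finite A" and x: "x \<in> l2"
  defines "c \<equiv> \<lambda>k. l2_inner x (u k)"
  shows "(l2_norm x)\<^sup>2 = (l2_norm (\<lambda>n. x n - vec_lincomb u A c n))\<^sup>2 + (\<Sum>k\<in>A. (cmod (c k))\<^sup>2)"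
proof -
  define P where "P = vec_lincomb u A c"
  define z where "z = (\<lambda>n. x n - P n)"
  have P: "P \<in> l2" unfolding P_def using u A by (rule vec_lincomb_l2)
  have z: "z \<in> l2" unfolding z_def using x P by (rule l2_diff)
  have "l2_inner z (u k) = 0" if "k \<in> A" for k
  proof -
    have "l2_inner z (u k) = l2_inner x (u k) - l2_inner P (u k)"
      unfolding z_def by (rule l2_inner_diff_left[OF x P orthonormal_seq_l2[OF u]])
    then show ?thesis using that by (simp add: P_def c_def l2_inner_vec_lincomb_basis[OF u A])
  qed
  then have zP: "l2_inner z P = 0"
    unfolding P_def by (simp add: l2_inner_vec_lincomb_right[OF u A z])
  have "x = (\<lambda>n. z n + 1 * P n)" by (simp add: z_def)
  then have "Re (l2_inner x x) = Re (l2_inner z z) + Re (l2_inner P P)"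
    using psd_form_expand[OF psd_form_l2_inner z P, of 1] zP by simp
  moreover have "Re (l2_inner P P) = (\<Sum>k\<in>A. (cmod (c k))\<^sup>2)"
    using l2_norm_vec_lincomb[OF u A, of c] l2_inner_self[OF P] by (simp add: P_def)
  ultimately show ?thesis
    using l2_inner_self[OF x] l2_inner_self[OF z] by (simp add: z_def P_def)
qed

lemma bessel_inequality:
  assumes u: "orthonormal_seq u" and A: "finite A" and x: "x \<in> l2"
  shows "(\<Sum>k\<in>A. (cmod (l2_inner x (u k)))\<^sup>2) \<le> (l2_norm x)\<^sup>2"
  using bessel_identity[OF u A x] by simp

lemma summable_square_coeffs:
  assumes u: "orthonormal_seq u" and x: "x \<in> l2"
  shows "summable (\<lambda>k. (cmod (l2_inner x (u k)))\<^sup>2)"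
  by (rule summableI_nonneg_bounded[where x="(l2_norm x)\<^sup>2"]) (simp_all add: bessel_inequality[OF u _ x])

lemma coeffs_tendsto_zero:
  assumes u: "orthonormal_seq u" and x: "x \<in> l2"
  shows "(\<lambda>k. l2_inner x (u k)) \<longlonglongrightarrow> 0"
proof -
  have "(\<lambda>k. sqrt ((cmod (l2_inner x (u k)))\<^sup>2)) \<longlonglongrightarrow> sqrt 0"
    by (intro tendsto_real_sqrt summable_LIMSEQ_zero summable_square_coeffs[OF u x])
  then have "(\<lambda>k. norm (l2_inner x (u k))) \<longlonglongrightarrow> 0" by simp
  then show ?thesis by (rule tendsto_norm_zero_cancel)
qed

definition unit_vec :: "nat \<Rightarrow> vec" where
  "unit_vec m = (\<lambda>n. if n = m then 1 else 0)"

lemma unit_vec_l2: "unit_vec m \<in> l2"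
proof -
  have "(\<lambda>n. (cmod (unit_vec m n))\<^sup>2) = (\<lambda>n. if n = m then 1 else 0)"
    by (auto simp: unit_vec_def)
  then show ?thesis unfolding l2_def by simp
qed

lemma l2_inner_unit_vec: "l2_inner (unit_vec m) y = cnj (y m)"
proof -
  have "(\<lambda>n. unit_vec m n * cnj (y n)) = (\<lambda>n. if n = m then cnj (y m) else 0)"
    by (auto simp: unit_vec_def)
  moreover have "(\<lambda>n. if n = m then cnj (y m) else 0) sums cnj (y m)" by (rule sums_single)
  ultimately show ?thesis unfolding l2_inner_def by (simp add: sums_iff)
qed

lemma orthonormal_seq_summable_column:
  "orthonormal_seq u \<Longrightarrow> summable (\<lambda>k. (cmod (u k n))\<^sup>2)"
  using summable_square_coeffs[OF _ unit_vec_l2, of u n] by (simp add: l2_inner_unit_vec)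

lemma l2_pointwise_limit:
  fixes z :: "nat \<Rightarrow> vec" and w :: vec and r :: real
  assumes z: "\<And>M. z M \<in> l2"
    and lim: "\<And>n. (\<lambda>L. z L n) \<longlonglongrightarrow> w n"
    and cauchy: "\<And>L. M \<le> L \<Longrightarrow> (l2_norm (\<lambda>n. z M n - z L n))\<^sup>2 \<le> r"
  shows "(\<lambda>n. z M n - w n) \<in> l2" and "(l2_norm (\<lambda>n. z M n - w n))\<^sup>2 \<le> r"
proof -
  txt \<open>Fatou: partial sums of \<open>|z\<^sub>M - w|\<^sup>2\<close> are limits of those of \<open>|z\<^sub>M - z\<^sub>L|\<^sup>2\<close>.\<close>
  have partial: "(\<Sum>n<N. (cmod (z M n - w n))\<^sup>2) \<le> r" for N
  proof (rule LIMSEQ_le_const2)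
    show "(\<lambda>L. \<Sum>n<N. (cmod (z M n - z L n))\<^sup>2) \<longlonglongrightarrow> (\<Sum>n<N. (cmod (z M n - w n))\<^sup>2)"
      by (intro tendsto_intros lim)
    have "(\<Sum>n<N. (cmod (z M n - z L n))\<^sup>2) \<le> r" if "M \<le> L" for L
    proof -
      have "(\<Sum>n<N. (cmod (z M n - z L n))\<^sup>2) \<le> (l2_norm (\<lambda>n. z M n - z L n))\<^sup>2"
        using l2_diff[OF z z, of M L]
        by (simp add: l2_norm_square l2_def sum_le_suminf)
      with cauchy[OF that] show ?thesis by linarith
    qed
    then show "\<exists>L0. \<forall>L\<ge>L0. (\<Sum>n<N. (cmod (z M n - z L n))\<^sup>2) \<le> r" by blast
  qed
  show l2: "(\<lambda>n. z M n - w n) \<in> l2"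
    unfolding l2_def mem_Collect_eq by (rule summableI_nonneg_bounded[OF _ partial]) simp
  show "(l2_norm (\<lambda>n. z M n - w n))\<^sup>2 \<le> r"
    using partial l2 by (simp add: l2_norm_square l2_def suminf_le_const)
qed

lemma l2_inner_tendsto_left:
  assumes z: "\<And>M. z M \<in> l2" and w: "w \<in> l2" and v: "v \<in> l2"
    and lim: "(\<lambda>M. l2_norm (\<lambda>n. z M n - w n)) \<longlonglongrightarrow> 0"
  shows "(\<lambda>M. l2_inner (z M) v) \<longlonglongrightarrow> l2_inner w v"
proof -
  have "\<forall>M. cmod (l2_inner (z M) v - l2_inner w v) \<le> l2_norm (\<lambda>n. z M n - w n) * l2_norm v"
    using l2_inner_Cauchy_Schwarz[OF l2_diff[OF z w] v] l2_inner_diff_left[OF z w v] by simp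
  moreover have "(\<lambda>M. l2_norm (\<lambda>n. z M n - w n) * l2_norm v) \<longlonglongrightarrow> 0"
    using tendsto_mult_left_zero[OF lim] by simp
  ultimately have "(\<lambda>M. l2_inner (z M) v - l2_inner w v) \<longlonglongrightarrow> 0"
    by (rule Lim_null_comparison[OF always_eventually])
  then show ?thesis by (simp add: LIM_zero_iff)
qed

lemma orthonormal_basis_expansion_tendsto:
  assumes u: "orthonormal_basis u" and x: "x \<in> l2"
  defines "c \<equiv> \<lambda>k. l2_inner x (u k)"
  shows "(\<lambda>M. l2_norm (\<lambda>n. x n - vec_lincomb u {..<M} c n)) \<longlonglongrightarrow> 0"
proof -
  have uo: "orthonormal_seq u" using u by (simp add: orthonormal_basis_def)
  define R where "R = (\<lambda>M. (\<Sum>k. (cmod (c k))\<^sup>2) - (\<Sum>k<M. (cmod (c k))\<^sup>2))"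
  define z where "z = (\<lambda>M n. x n - vec_lincomb u {..<M} c n)"
  txt \<open>The residuals \<open>z\<^sub>M\<close> converge pointwise to \<open>w\<close>, and in norm by completeness of
    \<open>l2\<close>; \<open>w\<close> is orthogonal to every \<open>u\<^sub>j\<close>, hence zero because \<open>u\<close> is a basis.\<close>
  define w where "w = (\<lambda>n. x n - (\<Sum>k. c k * u k n))"
  have cs: "summable (\<lambda>k. (cmod (c k))\<^sup>2)" unfolding c_def using uo x by (rule summable_square_coeffs)
  have "R \<longlonglongrightarrow> 0" unfolding R_def using cs by (rule suminf_tail_tendsto_zero)
  then have sqrt_R: "(\<lambda>M. sqrt (R M)) \<longlonglongrightarrow> 0" using tendsto_real_sqrt by fastforce
  have z: "z M \<in> l2" for M unfolding z_def using x vec_lincomb_l2[OF uo] by (simp add: l2_diff)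
  have lim: "(\<lambda>M. z M n) \<longlonglongrightarrow> w n" for n
    unfolding z_def w_def vec_lincomb_def
    using summable_mult_square_summable[OF cs orthonormal_seq_summable_column[OF uo]]
    by (intro tendsto_diff tendsto_const summable_LIMSEQ)
  have cauchy: "(l2_norm (\<lambda>n. z M n - z L n))\<^sup>2 \<le> R M" if "M \<le> L" for M L
  proof -
    have "(\<lambda>n. z M n - z L n) = vec_lincomb u {M..<L} c"
    proof
      fix n
      show "z M n - z L n = vec_lincomb u {M..<L} c n"
        using sum_diff_nat_ivl[of 0 M L "\<lambda>k. c k * u k n"] that
        by (simp add: z_def vec_lincomb_def atLeast0LessThan)
    qed
    then show ?thesis
      unfolding R_def using cs that by (simp add: l2_norm_vec_lincomb[OF uo] sum_le_suminf_tail)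
  qed
  have d: "(\<lambda>n. z M n - w n) \<in> l2" "(l2_norm (\<lambda>n. z M n - w n))\<^sup>2 \<le> R M" for M
    using l2_pointwise_limit[where r="R M", OF z lim cauchy] by simp_all
  have "l2_norm (\<lambda>n. z M n - w n) \<le> sqrt (R M)" for M
    using d(2) by (rule real_le_rsqrt)
  then have z_w: "(\<lambda>M. l2_norm (\<lambda>n. z M n - w n)) \<longlonglongrightarrow> 0"
    by (intro tendsto_sandwich[OF _ _ tendsto_const sqrt_R] always_eventually allI l2_norm_nonneg d(1))
  have w: "w \<in> l2" using l2_diff[OF z[of 0] d(1)[of 0]] by simp
  have "l2_inner w (u j) = 0" for j
  proof -
    have "\<forall>\<^sub>F M in sequentially. l2_inner (z M) (u j) = 0"
      unfolding eventually_sequentially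
      using l2_inner_diff_left[OF x vec_lincomb_l2[OF uo] orthonormal_seq_l2[OF uo]]
      by (intro exI[of _ "Suc j"]) (simp add: z_def c_def l2_inner_vec_lincomb_basis[OF uo])
    then have "(\<lambda>M. l2_inner (z M) (u j)) \<longlonglongrightarrow> 0" by (rule tendsto_eventually)
    then show ?thesis
      using l2_inner_tendsto_left[OF z w orthonormal_seq_l2[OF uo] z_w] LIMSEQ_unique by blast
  qed
  then have "w = (\<lambda>n. 0)" using u w unfolding orthonormal_basis_def by blast
  then show ?thesis using z_w by (simp add: z_def)
qed

section \<open>Forms with summable diagonal\<close>

lemma form_seminorm_le_expansion:
  assumes B: "psd_form B" and bound: "\<And>z. z \<in> l2 \<Longrightarrow> Re (B z z) \<le> K * (l2_norm z)\<^sup>2"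
    and u: "orthonormal_seq u" and A: "finite A" and x: "x \<in> l2"
  shows "form_seminorm B x \<le> (\<Sum>k\<in>A. cmod (c k) * form_seminorm B (u k))
           + sqrt K * l2_norm (\<lambda>n. x n - vec_lincomb u A c n)"
proof -
  define P where "P = vec_lincomb u A c"
  define z where "z = (\<lambda>n. x n - P n)"
  have P: "P \<in> l2" unfolding P_def using u A by (rule vec_lincomb_l2)
  have z: "z \<in> l2" unfolding z_def using x P by (rule l2_diff)
  have "form_seminorm B x \<le> form_seminorm B P + form_seminorm B z"
    using form_seminorm_add[OF B P z] by (simp add: z_def)
  moreover have "form_seminorm B P \<le> (\<Sum>k\<in>A. cmod (c k) * form_seminorm B (u k))"
    using form_seminorm_sum[OF B A, of "\<lambda>k n. c k * u k n"] A
    by (simp add: P_def vec_lincomb_def l2_scale orthonormal_seq_l2[OF u]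
        form_seminorm_scale[OF B orthonormal_seq_l2[OF u]])
  moreover have "form_seminorm B z \<le> sqrt K * l2_norm z"
    using real_sqrt_le_mono[OF bound[OF z]] by (simp add: form_seminorm_def real_sqrt_mult l2_norm_nonneg[OF z])
  ultimately show ?thesis by (simp add: z_def P_def)
qed

lemma form_seminorm_le_head_tail:
  assumes B: "psd_form B" and bound: "\<And>z. z \<in> l2 \<Longrightarrow> Re (B z z) \<le> K * (l2_norm z)\<^sup>2"
    and u: "orthonormal_basis u" and x: "x \<in> l2" "l2_norm x \<le> 1"
    and t: "summable (\<lambda>k. Re (B (u k) (u k)))"
  shows "form_seminorm B x \<le> (\<Sum>k<N. cmod (l2_inner x (u k)) * form_seminorm B (u k))
           + sqrt ((\<Sum>k. Re (B (u k) (u k))) - (\<Sum>k<N. Re (B (u k) (u k))))"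
    (is "_ \<le> ?head + sqrt ?tail")
proof -
  have uo: "orthonormal_seq u" using u by (simp add: orthonormal_basis_def)
  define c where "c = (\<lambda>k. l2_inner x (u k))"
  define q where "q = (\<lambda>k. form_seminorm B (u k))"
  have t_nonneg: "0 \<le> Re (B (u k) (u k))" for k by (rule psd_form_nonneg[OF B orthonormal_seq_l2[OF uo]])
  have "form_seminorm B x \<le> ?head + sqrt ?tail + sqrt K * l2_norm (\<lambda>n. x n - vec_lincomb u {..<M} c n)"
    if "N \<le> M" for M
  proof -
    have "(\<Sum>k\<in>{N..<M}. cmod (c k) * q k)\<^sup>2 \<le> (\<Sum>k\<in>{N..<M}. (cmod (c k))\<^sup>2) * (\<Sum>k\<in>{N..<M}. (q k)\<^sup>2)"
      by (rule Cauchy_Schwarz_ineq_sum)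
    also have "\<dots> \<le> 1 * ?tail"
    proof (rule mult_mono)
      show "(\<Sum>k\<in>{N..<M}. (cmod (c k))\<^sup>2) \<le> 1"
        using bessel_inequality[OF uo _ x(1), of "{N..<M}"] power_le_one[OF l2_norm_nonneg[OF x(1)] x(2), of 2]
        by (simp add: c_def)
      show "(\<Sum>k\<in>{N..<M}. (q k)\<^sup>2) \<le> ?tail"
        using sum_le_suminf_tail[OF t t_nonneg that] t_nonneg by (simp add: q_def form_seminorm_def)
    qed (simp_all add: sum_nonneg)
    finally have "(\<Sum>k\<in>{N..<M}. cmod (c k) * q k) \<le> sqrt ?tail"
      by (simp add: real_le_rsqrt)
    moreover have "(\<Sum>k<M. cmod (c k) * q k) = ?head + (\<Sum>k\<in>{N..<M}. cmod (c k) * q k)"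
      using sum_diff_nat_ivl[of 0 N M "\<lambda>k. cmod (c k) * q k"] that
      by (simp add: atLeast0LessThan c_def q_def)
    ultimately show ?thesis
      using form_seminorm_le_expansion[OF B bound uo _ x(1), of "{..<M}" c] by (simp add: q_def)
  qed
  moreover have "(\<lambda>M. ?head + sqrt ?tail + sqrt K * l2_norm (\<lambda>n. x n - vec_lincomb u {..<M} c n))
      \<longlonglongrightarrow> ?head + sqrt ?tail + sqrt K * 0"
    unfolding c_def by (intro tendsto_intros orthonormal_basis_expansion_tendsto[OF u x(1)])
  ultimately show ?thesis
    by (intro LIMSEQ_le_const[where a="form_seminorm B x"]) auto
qed

lemma psd_form_tendsto_zero_on_orthonormal_seq:
  assumes B: "psd_form B" and bound: "\<And>z. z \<in> l2 \<Longrightarrow> Re (B z z) \<le> K * (l2_norm z)\<^sup>2"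
    and u: "orthonormal_basis u" and t: "summable (\<lambda>k. Re (B (u k) (u k)))"
    and x: "orthonormal_seq x"
  shows "(\<lambda>n. Re (B (x n) (x n))) \<longlonglongrightarrow> 0"
proof -
  have uo: "orthonormal_seq u" using u by (simp add: orthonormal_basis_def)
  define head where
    "head = (\<lambda>N n. \<Sum>k<N. cmod (l2_inner (x n) (u k)) * form_seminorm B (u k))"
  define tail where
    "tail = (\<lambda>N. (\<Sum>k. Re (B (u k) (u k))) - (\<Sum>k<N. Re (B (u k) (u k))))"
  have "tail \<longlonglongrightarrow> 0" unfolding tail_def using t by (rule suminf_tail_tendsto_zero)
  then have sqrt_tail: "(\<lambda>N. sqrt (tail N)) \<longlonglongrightarrow> 0" using tendsto_real_sqrt by fastforce
  have "(\<lambda>n. l2_inner (x n) (u k)) \<longlonglongrightarrow> 0" for k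
    using tendsto_cnj[OF coeffs_tendsto_zero[OF x orthonormal_seq_l2[OF uo, of k]]]
    by (simp add: l2_inner_commute[OF orthonormal_seq_l2[OF uo] orthonormal_seq_l2[OF x]])
  then have head: "head N \<longlonglongrightarrow> 0" for N
    unfolding head_def by (intro tendsto_null_sum tendsto_mult_left_zero tendsto_norm_zero)
  have "(\<lambda>n. form_seminorm B (x n)) \<longlonglongrightarrow> 0"
  proof (rule tendstoI)
    fix e :: real
    assume "0 < e"
    then have "\<forall>\<^sub>F N in sequentially. sqrt (tail N) < e / 2" by (intro order_tendstoD(2)[OF sqrt_tail]) simp
    then obtain N where N: "sqrt (tail N) < e / 2" by (auto simp: eventually_sequentially)
    have "\<forall>\<^sub>F n in sequentially. head N n < e / 2" using \<open>0 < e\<close> by (intro order_tendstoD(2)[OF head]) simp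
    then show "\<forall>\<^sub>F n in sequentially. dist (form_seminorm B (x n)) 0 < e"
    proof (rule eventually_mono)
      fix n
      assume "head N n < e / 2"
      moreover have "l2_norm (x n) \<le> 1" by (simp add: orthonormal_seq_norm[OF x])
      then have "form_seminorm B (x n) \<le> head N n + sqrt (tail N)"
        using form_seminorm_le_head_tail[OF B bound u orthonormal_seq_l2[OF x] _ t]
        unfolding head_def tail_def by blast
      ultimately show "dist (form_seminorm B (x n)) 0 < e"
        using N psd_form_nonneg[OF B orthonormal_seq_l2[OF x, of n]] by (simp add: form_seminorm_def)
    qed
  qed
  then have "(\<lambda>n. (form_seminorm B (x n))\<^sup>2) \<longlonglongrightarrow> 0"
    using tendsto_power[of _ 0 _ 2] by fastforce
  then show ?thesis
    using psd_form_nonneg[OF B orthonormal_seq_l2[OF x]] by (simp add: form_seminorm_def)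
qed

section \<open>Self-adjoint operators and their shifted forms\<close>

lemma bounded_op_l2: "bounded_op T \<Longrightarrow> x \<in> l2 \<Longrightarrow> T x \<in> l2"
  by (simp add: bounded_op_def)

lemma bounded_op_add:
  "bounded_op T \<Longrightarrow> x \<in> l2 \<Longrightarrow> y \<in> l2 \<Longrightarrow> T (\<lambda>n. x n + y n) = (\<lambda>n. T x n + T y n)"
  by (simp add: bounded_op_def vadd_def)

lemma bounded_op_scale: "bounded_op T \<Longrightarrow> x \<in> l2 \<Longrightarrow> T (\<lambda>n. c * x n) = (\<lambda>n. c * T x n)"
  by (simp add: bounded_op_def vscale_def)

lemma selfadjoint_l2_inner: "selfadjoint T \<Longrightarrow> x \<in> l2 \<Longrightarrow> y \<in> l2 \<Longrightarrow> l2_inner (T x) y = l2_inner x (T y)"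
  by (simp add: selfadjoint_def)

lemma selfadjoint_quadratic_bound:
  assumes "selfadjoint T"
  obtains K where "\<And>x. x \<in> l2 \<Longrightarrow> cmod (l2_inner (T x) x) \<le> K * (l2_norm x)\<^sup>2"
proof -
  have T: "bounded_op T" using assms by (simp add: selfadjoint_def)
  then obtain C where C: "\<And>x. x \<in> l2 \<Longrightarrow> l2_norm (T x) \<le> C * l2_norm x"
    unfolding bounded_op_def by blast
  have "cmod (l2_inner (T x) x) \<le> \<bar>C\<bar> * (l2_norm x)\<^sup>2" if x: "x \<in> l2" for x
  proof -
    have "cmod (l2_inner (T x) x) \<le> l2_norm (T x) * l2_norm x"
      by (rule l2_inner_Cauchy_Schwarz[OF bounded_op_l2[OF T x] x])
    also have "\<dots> \<le> (\<bar>C\<bar> * l2_norm x) * l2_norm x"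
      using C[OF x] l2_norm_nonneg[OF x] by (meson abs_ge_self mult_right_mono order_trans)
    finally show ?thesis by (simp add: power2_eq_square mult.assoc)
  qed
  then show ?thesis by (rule that)
qed

lemma selfadjoint_bdd_below_numerical_range:
  assumes "selfadjoint T"
  shows "bdd_below (Re ` numerical_range T)"
proof -
  obtain K where K: "\<And>x. x \<in> l2 \<Longrightarrow> cmod (l2_inner (T x) x) \<le> K * (l2_norm x)\<^sup>2"
    using selfadjoint_quadratic_bound[OF assms] by blast
  show ?thesis
  proof (rule bdd_belowI)
    fix r
    assume "r \<in> Re ` numerical_range T"
    then obtain y where "y \<in> l2" "l2_norm y = 1" "r = Re (l2_inner (T y) y)"
      unfolding numerical_range_def by auto
    then show "- K \<le> r"
      using K[of y] abs_Re_le_cmod[of "l2_inner (T y) y"] by simp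
  qed
qed

lemma numerical_range_Inf_le:
  assumes T: "selfadjoint T" and x: "x \<in> l2"
  shows "Inf (Re ` numerical_range T) * (l2_norm x)\<^sup>2 \<le> Re (l2_inner (T x) x)"
proof -
  have bT: "bounded_op T" using T by (simp add: selfadjoint_def)
  show ?thesis
  proof (cases "l2_norm x = 0")
    case True
    then show ?thesis
      using l2_inner_Cauchy_Schwarz[OF bounded_op_l2[OF bT x] x] by simp
  next
    case False
    define r where "r = l2_norm x"
    have "r > 0" using False l2_norm_nonneg[OF x] by (simp add: r_def)
    define y where "y = (\<lambda>n. complex_of_real (1 / r) * x n)"
    have y: "y \<in> l2" unfolding y_def using x by (rule l2_scale)
    have "l2_norm y = 1"
      using l2_norm_scale[OF x, of "complex_of_real (1 / r)"] \<open>r > 0\<close>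
      by (simp add: y_def r_def norm_divide)
    then have "Re (l2_inner (T y) y) \<in> Re ` numerical_range T"
      unfolding numerical_range_def using y by blast
    then have Inf_le: "Inf (Re ` numerical_range T) \<le> Re (l2_inner (T y) y)"
      by (rule cInf_lower[OF _ selfadjoint_bdd_below_numerical_range[OF T]])
    have "l2_inner (T y) y = complex_of_real (1 / r) * cnj (complex_of_real (1 / r)) * l2_inner (T x) x"
      unfolding y_def bounded_op_scale[OF bT x]
        l2_inner_scale_left[OF bounded_op_l2[OF bT x] l2_scale[OF x]]
        l2_inner_scale_right[OF x bounded_op_l2[OF bT x]]
      by (simp only: mult.assoc)
    then have "Re (l2_inner (T y) y) = Re (l2_inner (T x) x) / r\<^sup>2"
      by (simp add: power2_eq_square)
    with Inf_le show ?thesis using \<open>r > 0\<close> by (simp add: r_def field_simps)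
  qed
qed

definition shifted_form :: "op \<Rightarrow> real \<Rightarrow> vec \<Rightarrow> vec \<Rightarrow> complex" where
  "shifted_form T a x y = l2_inner (T x) y - complex_of_real a * l2_inner x y"

lemma Re_shifted_form:
  "x \<in> l2 \<Longrightarrow> Re (shifted_form T a x x) = Re (l2_inner (T x) x) - a * (l2_norm x)\<^sup>2"
  by (simp add: shifted_form_def l2_inner_self)

lemma psd_shifted_form:
  assumes T: "selfadjoint T"
  shows "psd_form (shifted_form T (Inf (Re ` numerical_range T)))"
    (is "psd_form (shifted_form T ?a)")
proof -
  have bT: "bounded_op T" using T by (simp add: selfadjoint_def)
  show ?thesis
    unfolding psd_form_def
  proof (intro conjI ballI allI)
    fix x y z
    assume "x \<in> l2" "y \<in> l2" "z \<in> l2"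
    then show "shifted_form T ?a (\<lambda>n. x n + y n) z = shifted_form T ?a x z + shifted_form T ?a y z"
      using bT by (simp add: shifted_form_def bounded_op_add l2_inner_add_left bounded_op_l2 algebra_simps)
  next
    fix x z c
    assume "x \<in> l2" "z \<in> l2"
    then show "shifted_form T ?a (\<lambda>n. c * x n) z = c * shifted_form T ?a x z"
      using bT by (simp add: shifted_form_def bounded_op_scale l2_inner_scale_left bounded_op_l2 algebra_simps)
  next
    fix x y
    assume x: "x \<in> l2" and y: "y \<in> l2"
    then show "shifted_form T ?a y x = cnj (shifted_form T ?a x y)"
      using l2_inner_commute[OF bounded_op_l2[OF bT x] y] l2_inner_commute[OF x y]
      by (simp add: shifted_form_def selfadjoint_l2_inner[OF T y x])
  next
    fix x
    assume "x \<in> l2"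
    then show "0 \<le> Re (shifted_form T ?a x x)"
      using numerical_range_Inf_le[OF T] by (simp add: Re_shifted_form)
  qed
qed

lemma shifted_form_bound:
  assumes "selfadjoint T"
  obtains K where "\<And>z. z \<in> l2 \<Longrightarrow> Re (shifted_form T a z z) \<le> K * (l2_norm z)\<^sup>2"
proof -
  obtain K where K: "\<And>x. x \<in> l2 \<Longrightarrow> cmod (l2_inner (T x) x) \<le> K * (l2_norm x)\<^sup>2"
    using selfadjoint_quadratic_bound[OF assms] by blast
  have "Re (shifted_form T a z z) \<le> (K - a) * (l2_norm z)\<^sup>2" if "z \<in> l2" for z
    using K[OF that] complex_Re_le_cmod[of "l2_inner (T z) z"] that
    by (simp add: Re_shifted_form left_diff_distrib)
  then show ?thesis by (rule that)
qed

definition op_lincomb :: "real \<Rightarrow> ('s::finite \<Rightarrow> real) \<Rightarrow> ('s \<Rightarrow> op) \<Rightarrow> op" where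
  "op_lincomb c0 c S =
     (\<lambda>x. (\<lambda>n. complex_of_real c0 * x n + (\<Sum>j\<in>UNIV. complex_of_real (c j) * S j x n)))"

lemma l2_inner_op_lincomb_left:
  assumes S: "\<forall>j. bounded_op (S j)" and x: "x \<in> l2" and y: "y \<in> l2"
  shows "l2_inner (op_lincomb c0 c S x) y
           = complex_of_real c0 * l2_inner x y + (\<Sum>j\<in>UNIV. complex_of_real (c j) * l2_inner (S j x) y)"
  using S x y
  by (simp add: op_lincomb_def l2_inner_add_left l2_inner_scale_left l2_inner_sum_left
      l2_scale l2_sum bounded_op_l2)

lemma bounded_op_op_lincomb:
  assumes bS: "\<forall>j. bounded_op (S j)"
  shows "bounded_op (op_lincomb c0 c S)"
proof -
  have l2: "op_lincomb c0 c S x \<in> l2" if "x \<in> l2" for x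
    using that bS by (simp add: op_lincomb_def l2_add l2_scale l2_sum bounded_op_l2)
  have "\<forall>j. \<exists>C. \<forall>x\<in>l2. l2_norm (S j x) \<le> C * l2_norm x"
    using bS by (simp add: bounded_op_def)
  then obtain C where C: "\<And>j x. x \<in> l2 \<Longrightarrow> l2_norm (S j x) \<le> C j * l2_norm x"
    by metis
  have "l2_norm (op_lincomb c0 c S x) \<le> (\<bar>c0\<bar> + (\<Sum>j\<in>UNIV. \<bar>c j\<bar> * C j)) * l2_norm x"
    if x: "x \<in> l2" for x
  proof -
    have "l2_norm (op_lincomb c0 c S x)
        \<le> l2_norm (\<lambda>n. complex_of_real c0 * x n)
          + l2_norm (\<lambda>n. \<Sum>j\<in>UNIV. complex_of_real (c j) * S j x n)"
      unfolding op_lincomb_def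
      by (rule l2_norm_add_le[OF l2_scale[OF x] l2_sum]) (use x bS in \<open>auto intro: l2_scale bounded_op_l2\<close>)
    also have "l2_norm (\<lambda>n. \<Sum>j\<in>UNIV. complex_of_real (c j) * S j x n)
        \<le> (\<Sum>j\<in>UNIV. l2_norm (\<lambda>n. complex_of_real (c j) * S j x n))"
      by (rule l2_norm_sum_le) (use x bS in \<open>auto intro: l2_scale bounded_op_l2\<close>)
    also have "\<dots> \<le> (\<Sum>j\<in>UNIV. \<bar>c j\<bar> * (C j * l2_norm x))"
    proof (rule sum_mono)
      fix j
      have "l2_norm (\<lambda>n. complex_of_real (c j) * S j x n) = \<bar>c j\<bar> * l2_norm (S j x)"
        using bS x by (simp add: l2_norm_scale bounded_op_l2)
      then show "l2_norm (\<lambda>n. complex_of_real (c j) * S j x n) \<le> \<bar>c j\<bar> * (C j * l2_norm x)"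
        using C[OF x, of j] by (simp add: mult_left_mono)
    qed
    also have "l2_norm (\<lambda>n. complex_of_real c0 * x n) = \<bar>c0\<bar> * l2_norm x"
      using x by (simp add: l2_norm_scale)
    finally show ?thesis by (simp add: distrib_right sum_distrib_right mult.assoc)
  qed
  moreover have "op_lincomb c0 c S (vadd x y) = vadd (op_lincomb c0 c S x) (op_lincomb c0 c S y)"
    if "x \<in> l2" "y \<in> l2" for x y
    using that bS by (simp add: op_lincomb_def vadd_def bounded_op_add sum.distrib algebra_simps)
  moreover have "op_lincomb c0 c S (vscale a x) = vscale a (op_lincomb c0 c S x)" if "x \<in> l2" for x a
    using that bS by (simp add: op_lincomb_def vscale_def bounded_op_scale sum_distrib_left algebra_simps)
  ultimately show ?thesis
    unfolding bounded_op_def using l2 by blast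
qed

lemma selfadjoint_op_lincomb:
  assumes S: "\<forall>j. selfadjoint (S j)"
  shows "selfadjoint (op_lincomb c0 c S)"
proof -
  have bS: "\<forall>j. bounded_op (S j)" using S by (simp add: selfadjoint_def)
  note V = bounded_op_op_lincomb[OF bS, of c0 c]
  moreover have "l2_inner (op_lincomb c0 c S x) y = l2_inner x (op_lincomb c0 c S y)"
    if x: "x \<in> l2" and y: "y \<in> l2" for x y
  proof -
    have Sy: "S j y \<in> l2" for j using bS y by (simp add: bounded_op_l2)
    have "l2_inner x (op_lincomb c0 c S y) = cnj (l2_inner (op_lincomb c0 c S y) x)"
      by (rule l2_inner_commute[OF bounded_op_l2[OF V y] x])
    also have "\<dots> = complex_of_real c0 * l2_inner x y + (\<Sum>j\<in>UNIV. complex_of_real (c j) * l2_inner (S j x) y)"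
      by (simp add: l2_inner_op_lincomb_left[OF bS y x] cnj_sum l2_inner_commute[OF x y]
          l2_inner_commute[OF x Sy] selfadjoint_l2_inner[OF S[rule_format] x y])
    also have "\<dots> = l2_inner (op_lincomb c0 c S x) y"
      by (rule l2_inner_op_lincomb_left[OF bS x y, symmetric])
    finally show ?thesis ..
  qed
  ultimately show ?thesis by (simp add: selfadjoint_def)
qed

lemma Re_op_lincomb_quadratic:
  assumes "\<forall>j. bounded_op (S j)" and "x \<in> l2"
  shows "Re (l2_inner (op_lincomb c0 c S x) x) = c0 * (l2_norm x)\<^sup>2 + (\<Sum>j\<in>UNIV. c j * Re (l2_inner (S j x) x))"
  using assms by (simp add: l2_inner_op_lincomb_left l2_inner_self)

lemma Re_shifted_form_op_lincomb_unit:
  assumes S: "\<forall>j. bounded_op (S j)" and y: "y \<in> l2" "l2_norm y = 1"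
  shows "Re (shifted_form (op_lincomb c0 c S) a y y) = c0 - a + (\<Sum>j\<in>UNIV. c j * Re (l2_inner (S j y) y))"
  using y by (simp add: Re_shifted_form Re_op_lincomb_quadratic[OF S])

lemma shifted_form_op_lincomb_tendsto:
  assumes S: "\<forall>j. bounded_op (S j)" and x: "orthonormal_seq x"
    and lim: "\<And>j. (\<lambda>k. Re (l2_inner (S j (x k)) (x k))) \<longlonglongrightarrow> \<mu> $ j"
  shows "(\<lambda>k. Re (shifted_form (op_lincomb c0 c S) a (x k) (x k))) \<longlonglongrightarrow> c0 - a + (\<Sum>j\<in>UNIV. c j * \<mu> $ j)"
  using Re_shifted_form_op_lincomb_unit[OF S orthonormal_seq_l2[OF x] orthonormal_seq_norm[OF x]]
  by (simp add: tendsto_intros lim)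

lemma shifted_form_vanishes_on_ess_num_range:
  assumes S: "\<forall>j. bounded_op (S j)" and B: "psd_form (shifted_form (op_lincomb c0 c S) a)"
    and bound: "\<And>z. z \<in> l2 \<Longrightarrow> Re (shifted_form (op_lincomb c0 c S) a z z) \<le> K * (l2_norm z)\<^sup>2"
    and u: "orthonormal_basis u"
    and t: "summable (\<lambda>k. Re (shifted_form (op_lincomb c0 c S) a (u k) (u k)))"
    and \<mu>: "\<mu> \<in> ess_num_range S"
  shows "c0 - a + (\<Sum>j\<in>UNIV. c j * \<mu> $ j) = 0"
proof -
  obtain x where x: "orthonormal_seq x"
    and lim: "\<And>j. (\<lambda>k. Re (l2_inner (S j (x k)) (x k))) \<longlonglongrightarrow> \<mu> $ j"
    using \<mu> unfolding ess_num_range_def by blast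
  show ?thesis
    using LIMSEQ_unique[OF shifted_form_op_lincomb_tendsto[OF S x lim]
        psd_form_tendsto_zero_on_orthonormal_seq[OF B bound u t x]] .
qed

theorem corollary4p7:
  fixes S :: "'s::finite \<Rightarrow> op"
    and lam :: "nat \<Rightarrow> real^'s"
    and alpha0 :: real and alpha :: "'s \<Rightarrow> real"
    and V :: op and a :: real
  assumes "\<forall>j. selfadjoint (S j)"
    and "\<forall>k. lam k \<in> interior (ess_num_range S)"
    and "lam \<in> diagonals S"
    and "alpha \<noteq> (\<lambda>j. 0)"
    and "V = (\<lambda>x. (\<lambda>n. complex_of_real alpha0 * x n
                         + (\<Sum>j\<in>UNIV. complex_of_real (alpha j) * S j x n)))"
    and "a = Inf (Re ` numerical_range V)"
  shows "filterlim (\<lambda>N. \<Sum>k<N. alpha0 - a + (\<Sum>j\<in>UNIV. alpha j * lam k $ j))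
           at_top sequentially"
proof (rule ccontr)
  assume not_top: "\<not> ?thesis"
  have S: "\<forall>j. bounded_op (S j)" using assms(1) by (simp add: selfadjoint_def)
  have V: "V = op_lincomb alpha0 alpha S" using assms(5) by (simp add: op_lincomb_def)
  then have "selfadjoint V" using assms(1) by (simp add: selfadjoint_op_lincomb)
  then obtain K where K: "\<And>z. z \<in> l2 \<Longrightarrow> Re (shifted_form V a z z) \<le> K * (l2_norm z)\<^sup>2"
    and B: "psd_form (shifted_form V a)"
    using shifted_form_bound psd_shifted_form assms(6) by metis
  obtain u where u: "orthonormal_basis u"
    and lam_u: "\<And>k. lam k = (\<chi> j. Re (l2_inner (S j (u k)) (u k)))"
    using assms(3) unfolding diagonals_def by blast
  have uo: "orthonormal_seq u" using u by (simp add: orthonormal_basis_def)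
  have "Re (shifted_form V a (u k) (u k)) = alpha0 - a + (\<Sum>j\<in>UNIV. alpha j * lam k $ j)" for k
    unfolding V lam_u
    by (simp add: Re_shifted_form_op_lincomb_unit[OF S orthonormal_seq_l2[OF uo] orthonormal_seq_norm[OF uo]])
  then have "summable (\<lambda>k. Re (shifted_form V a (u k) (u k)))"
    using summable_if_not_tendsto_at_top[OF psd_form_nonneg[OF B orthonormal_seq_l2[OF uo]]] not_top
    by simp
  then have "alpha0 - a + (\<Sum>j\<in>UNIV. alpha j * \<mu> $ j) = 0" if "\<mu> \<in> ess_num_range S" for \<mu>
    using shifted_form_vanishes_on_ess_num_range[OF S B[unfolded V] K[unfolded V] u _ that] by (simp add: V)
  then have "alpha = (\<lambda>j. 0)"
    by (rule coeffs_zero_if_affine_vanishes_on_interior[OF assms(2)[rule_format, of 0]])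
  with assms(4) show False by contradiction
qed

end
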